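(* Let $J$ be an abelian topological semigroup with identity $0$ and $X$ a topological vector space over $\mathbf{C}$. If $\phi\in P^n(J,X)$ and there is $k$ with $0\le k<n$ such that $\phi(ms)=m^k\phi(s)$ for all $m\in\mathbf{Z}_+$ and $s\in J$, then $\phi\in P^k(J,X)$.
   Context: $\mathbf{Z}_+=\{0,1,2,\dots\}$. A continuous $p:J\to X$ is a polynomial of degree at most $n$ if for all $s,t\in J$ the map $m\mapsto p(s+mt)$, $m\in\mathbf{Z}_+$, is a polynomial in $m$ of degree at most $n$ with coefficients in $X$; $P^n(J,X)$ is the space of such polynomials. *)

theory Defs
  imports "HOL-Analysis.Analysis"
begin

definition complex_tvs :: "(complex \<Rightarrow> 'x::{ab_group_add,topological_space} \<Rightarrow> 'x) \<Rightarrow> bool" where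
  "complex_tvs sc \<longleftrightarrow> vector_space sc
     \<and> continuous_on UNIV (\<lambda>(x::'x, y::'x). x + y)
     \<and> continuous_on UNIV (\<lambda>(c::complex, x::'x). sc c x)"

definition natmul :: "nat \<Rightarrow> 'j::comm_monoid_add \<Rightarrow> 'j" where
  "natmul m t = (\<Sum>i<m. t)"

definition Ppoly :: "(complex \<Rightarrow> 'x::{ab_group_add,topological_space} \<Rightarrow> 'x) \<Rightarrow> nat
      \<Rightarrow> ('j::{comm_monoid_add,topological_space} \<Rightarrow> 'x) set" where
  "Ppoly sc n = {p. continuous_on UNIV p \<and>
     (\<forall>s t. \<exists>a::nat \<Rightarrow> 'x. \<forall>m::nat.
        p (s + natmul m t) = (\<Sum>j\<le>n. sc ((of_nat m) ^ j) (a j)))}"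

end

theory Submission
  imports Defs "HOL-Computational_Algebra.Polynomial"
begin

text \<open>Applying the polynomial hypothesis in both directions shows that
  \<open>F l m = \<phi>(l s + m t)\<close> is a polynomial in \<open>(l, m)\<close> of degree at most \<open>n\<close> in each variable;
  its coefficients are obtained from values at \<open>0, \<dots>, n\<close> by the (linear) Lagrange inversion
  of the Vandermonde system. Now \<open>F l (l m) = \<phi>(l (s + m t)) = l\<^sup>k F 1 m\<close>, so comparing the
  coefficients of \<open>l\<^sup>k\<close> in the expansion of \<open>F l (l m)\<close> writes \<open>\<phi>(s + m t)\<close> as a sum of
  terms \<open>m\<^sup>j d\<^sub>j\<^sub>,\<^sub>k\<^sub>-\<^sub>j\<close> with \<open>j \<le> k\<close>.\<close>

definition lagrange_basis :: "nat \<Rightarrow> nat \<Rightarrow> 'a::field_char_0 poly" where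
  "lagrange_basis N i = (\<Prod>k\<in>{..N}-{i}. smult (1 / (of_nat i - of_nat k)) [:- of_nat k, 1:])"

lemma poly_lagrange_basis_of_nat:
  assumes "i \<le> N" "r \<le> N"
  shows "poly (lagrange_basis N i) (of_nat r :: 'a::field_char_0) = (if r = i then 1 else 0)"
proof (cases "r = i")
  case True
  have "poly (lagrange_basis N i) (of_nat r :: 'a)
      = (\<Prod>k\<in>{..N}-{i}. (of_nat i - of_nat k) / (of_nat i - of_nat k :: 'a))"
    using True by (simp add: lagrange_basis_def poly_prod diff_divide_distrib[symmetric])
  also have "\<dots> = 1" by (intro prod.neutral) auto
  finally show ?thesis using True by simp
next
  case False
  with assms have "r \<in> {..N}-{i}" by auto
  with False show ?thesis unfolding lagrange_basis_def poly_prod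
    by (intro trans[OF prod_zero]) (auto intro!: bexI[of _ r])
qed

lemma degree_lagrange_basis_le: "i \<le> N \<Longrightarrow> degree (lagrange_basis N i :: 'a::field_char_0 poly) \<le> N"
proof -
  assume "i \<le> N"
  have "degree (lagrange_basis N i :: 'a poly)
      \<le> sum (degree \<circ> (\<lambda>k. smult (1 / (of_nat i - of_nat k)) [:- of_nat k, 1::'a:])) ({..N}-{i})"
    unfolding lagrange_basis_def by (rule degree_prod_sum_le) auto
  also have "\<dots> \<le> (\<Sum>k\<in>{..N}-{i}. 1)" by (intro sum_mono) auto
  also have "\<dots> \<le> N" using \<open>i \<le> N\<close> by simp
  finally show ?thesis .
qed

text \<open>The Lagrange coefficients form a left inverse of the Vandermonde matrix \<open>(i\<^sup>j)\<close>, since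
  \<open>\<Sum>\<^sub>i i\<^sup>j L\<^sub>i\<close> interpolates \<open>X\<^sup>j\<close> at \<open>0, \<dots>, N\<close>.\<close>

lemma lagrange_basis_vandermonde_inverse:
  assumes "l \<le> N" "j \<le> N"
  shows "(\<Sum>i\<le>N. coeff (lagrange_basis N i) l * of_nat i ^ j) = (if l = j then 1 else (0::'a::field_char_0))"
proof -
  define q :: "'a poly" where "q = (\<Sum>i\<le>N. smult (of_nat i ^ j) (lagrange_basis N i))"
  have card: "card (of_nat ` {..N} :: 'a set) = Suc N"
    by (subst card_image) (auto simp: inj_on_def)
  have "q = monom 1 j"
  proof (rule poly_eqI_degree[of "of_nat ` {..N}"])
    fix x :: 'a assume "x \<in> of_nat ` {..N}"
    then obtain r where r: "r \<le> N" "x = of_nat r" by auto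
    have "poly q x = (\<Sum>i\<le>N. of_nat i ^ j * (if r = i then 1 else 0))"
      using r by (simp add: q_def poly_sum poly_lagrange_basis_of_nat)
    also have "\<dots> = (\<Sum>i\<le>N. if r = i then of_nat r ^ j else 0)"
      by (intro sum.cong) auto
    finally show "poly q x = poly (monom 1 j) x" using r by (simp add: poly_monom)
  next
    have "degree q \<le> N" unfolding q_def
      by (intro degree_sum_le) (auto intro: order.trans[OF degree_smult_le] degree_lagrange_basis_le)
    then show "degree q < card (of_nat ` {..N} :: 'a set)" using card by simp
    show "degree (monom (1::'a) j) < card (of_nat ` {..N} :: 'a set)"
      using card assms(2) by (simp add: degree_monom_eq)
  qed
  then have "coeff q l = (if l = j then 1 else 0)" by (simp add: coeff_monom)
  then show ?thesis by (simp add: q_def coeff_sum mult.commute)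
qed

lemma module_recover_poly_coeffs:
  fixes sc :: "'a::field_char_0 \<Rightarrow> 'b::ab_group_add \<Rightarrow> 'b"
  assumes "module sc" "l \<le> N"
  shows "(\<Sum>i\<le>N. sc (coeff (lagrange_basis N i) l) (\<Sum>j\<le>N. sc (of_nat i ^ j) (v j))) = v l"
proof -
  interpret module sc by fact
  have "(\<Sum>i\<le>N. sc (coeff (lagrange_basis N i) l) (\<Sum>j\<le>N. sc (of_nat i ^ j) (v j)))
      = (\<Sum>i\<le>N. \<Sum>j\<le>N. sc (coeff (lagrange_basis N i) l * of_nat i ^ j) (v j))"
    by (simp add: scale_sum_right)
  also have "\<dots> = (\<Sum>j\<le>N. \<Sum>i\<le>N. sc (coeff (lagrange_basis N i) l * of_nat i ^ j) (v j))"
    by (rule sum.swap)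
  also have "\<dots> = (\<Sum>j\<le>N. sc (\<Sum>i\<le>N. coeff (lagrange_basis N i) l * of_nat i ^ j) (v j))"
    by (simp add: scale_sum_left)
  also have "\<dots> = (\<Sum>j\<le>N. if l = j then v j else 0)"
    using assms(2) by (intro sum.cong) (auto simp: lagrange_basis_vandermonde_inverse)
  also have "\<dots> = v l" using assms(2) by (simp add: sum.delta)
  finally show ?thesis .
qed

lemma module_poly_coeffs_unique:
  fixes sc :: "'a::field_char_0 \<Rightarrow> 'b::ab_group_add \<Rightarrow> 'b"
  assumes "module sc"
    and "\<And>m::nat. (\<Sum>j\<le>N. sc (of_nat m ^ j) (u j)) = (\<Sum>j\<le>N. sc (of_nat m ^ j) (u' j))"
    and "l \<le> N"
  shows "u l = u' l"
  using module_recover_poly_coeffs[OF assms(1,3), of u] module_recover_poly_coeffs[OF assms(1,3), of u']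
  by (simp add: assms(2))

lemma sum_if_add_eq:
  fixes f :: "nat \<Rightarrow> 'a::comm_monoid_add"
  assumes "k \<le> n"
  shows "(\<Sum>i\<le>n. if i + j = k then f i else 0) = (if j \<le> k then f (k - j) else 0)"
proof -
  have "(\<Sum>i\<le>n. if i + j = k then f i else 0) = (\<Sum>i\<le>n. if i = k - j then (if j \<le> k then f i else 0) else 0)"
    by (intro sum.cong) auto
  also have "\<dots> = (if j \<le> k then f (k - j) else 0)" using assms by (auto simp: sum.delta)
  finally show ?thesis .
qed

lemma module_diagonal_coeff:
  fixes sc :: "'a::field_char_0 \<Rightarrow> 'b::ab_group_add \<Rightarrow> 'b"
  assumes "module sc" "k \<le> n"
    and "\<And>l::nat. (\<Sum>j\<le>n. \<Sum>i\<le>n. sc (of_nat l ^ (i + j)) (w j i)) = sc (of_nat l ^ k) x"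
  shows "x = (\<Sum>j\<le>k. w j (k - j))"
proof -
  interpret module sc by fact
  have sc_if: "sc a (if c then y else 0) = (if c then sc a y else 0)" for a c y by simp
  define u where "u p = (\<Sum>j\<le>n. \<Sum>i\<le>n. if i + j = p then w j i else 0)" for p
  have expand: "(\<Sum>j\<le>n. \<Sum>i\<le>n. sc (of_nat l ^ (i + j)) (w j i)) = (\<Sum>p\<le>2*n. sc (of_nat l ^ p) (u p))"
    for l :: nat
  proof -
    have "(\<Sum>j\<le>n. \<Sum>i\<le>n. sc (of_nat l ^ (i + j)) (w j i))
        = (\<Sum>j\<le>n. \<Sum>i\<le>n. \<Sum>p\<le>2*n. if i + j = p then sc (of_nat l ^ p) (w j i) else 0)"
      by (intro sum.cong refl) (simp add: sum.delta)
    also have "\<dots> = (\<Sum>j\<le>n. \<Sum>p\<le>2*n. \<Sum>i\<le>n. if i + j = p then sc (of_nat l ^ p) (w j i) else 0)"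
      by (intro sum.cong refl sum.swap)
    also have "\<dots> = (\<Sum>p\<le>2*n. \<Sum>j\<le>n. \<Sum>i\<le>n. if i + j = p then sc (of_nat l ^ p) (w j i) else 0)"
      by (rule sum.swap)
    also have "\<dots> = (\<Sum>p\<le>2*n. sc (of_nat l ^ p) (u p))"
      by (simp add: u_def scale_sum_right sc_if)
    finally show ?thesis .
  qed
  have "x = u k"
    using module_poly_coeffs_unique[OF assms(1), where N = "2*n" and u = "\<lambda>p. if p = k then x else 0" and u' = u and l = k]
      assms(2,3) expand by (simp add: sc_if sum.delta')
  also have "\<dots> = (\<Sum>j\<le>n. if j \<le> k then w j (k - j) else 0)"
    unfolding u_def using assms(2) by (intro sum.cong refl) (rule sum_if_add_eq, simp)
  also have "\<dots> = (\<Sum>j\<le>k. w j (k - j))"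
    using assms(2) by (intro sum.mono_neutral_cong_right) auto
  finally show ?thesis .
qed

lemma natmul_0: "natmul 0 x = 0"
  by (simp add: natmul_def)

lemma natmul_Suc: "natmul (Suc l) x = x + natmul l x"
  by (simp add: natmul_def add.commute)

lemma natmul_add_left: "natmul (a + b) t = natmul a t + natmul b t"
  by (induction a) (simp_all add: natmul_Suc natmul_0 add_ac)

lemma natmul_add_right: "natmul l (x + y) = natmul l x + natmul l y"
  by (simp add: natmul_def sum.distrib)

lemma natmul_natmul: "natmul l (natmul m t) = natmul (l * m) t"
  by (induction l) (simp_all add: natmul_Suc natmul_0 natmul_add_left)

lemma Ppoly_bivariate:
  fixes sc :: "complex \<Rightarrow> 'x::{ab_group_add,topological_space} \<Rightarrow> 'x"
    and phi :: "'j::{comm_monoid_add,topological_space} \<Rightarrow> 'x"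
  assumes "module sc" "phi \<in> Ppoly sc n"
  obtains d where "\<And>l m. phi (natmul l s + natmul m t)
    = (\<Sum>j\<le>n. \<Sum>i\<le>n. sc (of_nat m ^ j * of_nat l ^ i) (d j i))"
proof -
  interpret module sc by fact
  have P: "\<exists>a. \<forall>m::nat. phi (s' + natmul m t') = (\<Sum>j\<le>n. sc (of_nat m ^ j) (a j))" for s' t'
    using assms(2) by (auto simp: Ppoly_def)
  obtain b where b: "\<And>l m. phi (natmul l s + natmul m t) = (\<Sum>j\<le>n. sc (of_nat m ^ j) (b l j))"
    using P[of "natmul _ s" t] by metis
  obtain c where c: "\<And>m l. phi (natmul l s + natmul m t) = (\<Sum>i\<le>n. sc (of_nat l ^ i) (c m i))"
    using P[of "natmul _ t" s] by (metis add.commute)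
  define d where "d j i = (\<Sum>r\<le>n. sc (coeff (lagrange_basis n r) j) (c r i))" for j i
  have b_d: "b l j = (\<Sum>i\<le>n. sc (of_nat l ^ i) (d j i))" if "j \<le> n" for l j
  proof -
    have "b l j = (\<Sum>r\<le>n. sc (coeff (lagrange_basis n r) j) (phi (natmul l s + natmul r t)))"
      using module_recover_poly_coeffs[OF assms(1) that, of "b l"] by (simp add: b)
    also have "\<dots> = (\<Sum>r\<le>n. \<Sum>i\<le>n. sc (of_nat l ^ i * coeff (lagrange_basis n r) j) (c r i))"
      by (simp add: c scale_sum_right mult.commute)
    also have "\<dots> = (\<Sum>i\<le>n. \<Sum>r\<le>n. sc (of_nat l ^ i * coeff (lagrange_basis n r) j) (c r i))"
      by (rule sum.swap)
    also have "\<dots> = (\<Sum>i\<le>n. sc (of_nat l ^ i) (d j i))"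
      by (simp add: d_def scale_sum_right)
    finally show ?thesis .
  qed
  show thesis
    by (rule that) (simp add: b b_d scale_sum_right)
qed

theorem lemma2p2:
  fixes sc :: "complex \<Rightarrow> 'x::{ab_group_add,topological_space} \<Rightarrow> 'x"
    and phi :: "'j::topological_comm_monoid_add \<Rightarrow> 'x"
    and n k :: nat
  assumes "complex_tvs sc"
    and "phi \<in> Ppoly sc n"
    and "k < n"
    and "\<forall>m::nat. \<forall>s. phi (natmul m s) = sc ((of_nat m) ^ k) (phi s)"
  shows "phi \<in> Ppoly sc k"
proof -
  interpret vector_space sc using assms(1) by (simp add: complex_tvs_def)
  have "\<exists>a. \<forall>m::nat. phi (s + natmul m t) = (\<Sum>j\<le>k. sc (of_nat m ^ j) (a j))" for s t
  proof -
    obtain d where d: "\<And>l m. phi (natmul l s + natmul m t)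
        = (\<Sum>j\<le>n. \<Sum>i\<le>n. sc (of_nat m ^ j * of_nat l ^ i) (d j i))"
      using Ppoly_bivariate[OF module_axioms assms(2)] by blast
    have "phi (s + natmul m t) = (\<Sum>j\<le>k. sc (of_nat m ^ j) (d j (k - j)))" for m
    proof (rule module_diagonal_coeff[OF module_axioms less_imp_le[OF assms(3)]])
      fix l :: nat
      have "(\<Sum>j\<le>n. \<Sum>i\<le>n. sc (of_nat l ^ (i + j)) (sc (of_nat m ^ j) (d j i)))
          = phi (natmul l s + natmul (l * m) t)"
        by (simp add: d power_add power_mult_distrib mult_ac)
      also have "\<dots> = phi (natmul l (s + natmul m t))"
        by (simp add: natmul_add_right natmul_natmul)
      also have "\<dots> = sc (of_nat l ^ k) (phi (s + natmul m t))"
        using assms(4) by blast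
      finally show "(\<Sum>j\<le>n. \<Sum>i\<le>n. sc (of_nat l ^ (i + j)) (sc (of_nat m ^ j) (d j i)))
          = sc (of_nat l ^ k) (phi (s + natmul m t))" .
    qed
    then show ?thesis by (intro exI[of _ "\<lambda>j. d j (k - j)"] allI)
  qed
  then show ?thesis using assms(2) by (auto simp: Ppoly_def)
qed

end
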